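(* Let $\Gamma$ be a reduct of $(\mathbb{Z};<)$ in which $\mathrm{suc}$ is primitive positive definable. Then $<$ is primitive positive definable in $\Gamma$ if and only if some one-sided infinite binary relation is primitive positive definable in $\Gamma$.
   Context: A reduct of $(\mathbb{Z};<)$ is a relational structure with domain $\mathbb{Z}$ whose relations are first-order definable in $(\mathbb{Z};<)$. $\mathrm{suc}=\{(x,y)\in\mathbb{Z}^2:y=x+1\}$. A binary relation $R$ first-order definable in $(\mathbb{Z};<)$ is one-sided infinite if there exist integers $c\le d$ such that for all $x\in\mathbb{Z}$: $(x,x+z)\notin R$ for every $z<c$, and $(x,x+z)\in R$ for every $z\ge d$. *)

theory Defs
  imports Main
begin

text \<open>Relations on the integers are represented as sets of integer lists
(tuples); an n-ary relation is a set of lists of length n. A relational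
structure with domain the integers is given by its set of relations.\<close>

type_synonym zrel = "int list set"

datatype fo = FLt nat nat | FEq nat nat | FNot fo | FAnd fo fo | FEx nat fo

fun fo_sat :: "fo \<Rightarrow> (nat \<Rightarrow> int) \<Rightarrow> bool" where
  "fo_sat (FLt i j) a = (a i < a j)"
| "fo_sat (FEq i j) a = (a i = a j)"
| "fo_sat (FNot \<phi>) a = (\<not> fo_sat \<phi> a)"
| "fo_sat (FAnd \<phi> \<psi>) a = (fo_sat \<phi> a \<and> fo_sat \<psi> a)"
| "fo_sat (FEx x \<phi>) a = (\<exists>v. fo_sat \<phi> (a(x := v)))"

fun fo_fv :: "fo \<Rightarrow> nat set" where
  "fo_fv (FLt i j) = {i, j}"
| "fo_fv (FEq i j) = {i, j}"
| "fo_fv (FNot \<phi>) = fo_fv \<phi>"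
| "fo_fv (FAnd \<phi> \<psi>) = fo_fv \<phi> \<union> fo_fv \<psi>"
| "fo_fv (FEx x \<phi>) = fo_fv \<phi> - {x}"

definition fo_definable :: "nat \<Rightarrow> zrel \<Rightarrow> bool" where
  "fo_definable n R \<longleftrightarrow> (\<exists>\<phi>. fo_fv \<phi> \<subseteq> {..<n} \<and>
     R = {xs. length xs = n \<and> fo_sat \<phi> (\<lambda>i. if i < n then xs ! i else 0)})"

definition reduct_Z_lt :: "zrel set \<Rightarrow> bool" where
  "reduct_Z_lt \<Gamma> \<longleftrightarrow> (\<forall>R\<in>\<Gamma>. \<exists>n. fo_definable n R)"

datatype pp = PTrue | PEq nat nat | PRel zrel "nat list" | PAnd pp pp | PEx nat pp

fun pp_sat :: "pp \<Rightarrow> (nat \<Rightarrow> int) \<Rightarrow> bool" where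
  "pp_sat PTrue a = True"
| "pp_sat (PEq i j) a = (a i = a j)"
| "pp_sat (PRel R vs) a = (map a vs \<in> R)"
| "pp_sat (PAnd \<phi> \<psi>) a = (pp_sat \<phi> a \<and> pp_sat \<psi> a)"
| "pp_sat (PEx x \<phi>) a = (\<exists>v. pp_sat \<phi> (a(x := v)))"

fun pp_fv :: "pp \<Rightarrow> nat set" where
  "pp_fv PTrue = {}"
| "pp_fv (PEq i j) = {i, j}"
| "pp_fv (PRel R vs) = set vs"
| "pp_fv (PAnd \<phi> \<psi>) = pp_fv \<phi> \<union> pp_fv \<psi>"
| "pp_fv (PEx x \<phi>) = pp_fv \<phi> - {x}"

fun pp_rels :: "pp \<Rightarrow> zrel set" where
  "pp_rels PTrue = {}"
| "pp_rels (PEq i j) = {}"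
| "pp_rels (PRel R vs) = {R}"
| "pp_rels (PAnd \<phi> \<psi>) = pp_rels \<phi> \<union> pp_rels \<psi>"
| "pp_rels (PEx x \<phi>) = pp_rels \<phi>"

definition pp_definable :: "zrel set \<Rightarrow> nat \<Rightarrow> zrel \<Rightarrow> bool" where
  "pp_definable \<Gamma> n R \<longleftrightarrow> (\<exists>\<phi>. pp_rels \<phi> \<subseteq> \<Gamma> \<and> pp_fv \<phi> \<subseteq> {..<n} \<and>
     R = {xs. length xs = n \<and> pp_sat \<phi> (\<lambda>i. if i < n then xs ! i else 0)})"

definition suc_rel :: zrel where
  "suc_rel = {[x, x + 1] | x. True}"

definition lt_rel :: zrel where
  "lt_rel = {[x, y] | x y. x < y}"

definition one_sided_infinite :: "zrel \<Rightarrow> bool" where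
  "one_sided_infinite R \<longleftrightarrow> fo_definable 2 R \<and>
     (\<exists>c d :: int. c \<le> d \<and> (\<forall>x. (\<forall>z. z < c \<longrightarrow> [x, x + z] \<notin> R) \<and>
                                  (\<forall>z. z \<ge> d \<longrightarrow> [x, x + z] \<in> R)))"

end

theory Submission
  imports Defs
begin

text \<open>A binary relation R that is first-order definable in (Z;<) is invariant under
translations, so R(x,y) only depends on y - x: it says that y - x lies in a set S of integers
that contains nothing below c and everything from d on. With N = d - c, the conjunction of
R(x, y - j) for j = 0..N says that the window [y - x - N, y - x] lies in S; the window then
starts at or above c, so it reaches d and the whole ray from its start lies in S. Hence the
conjunction holds exactly when y - x exceeds a threshold, and composing with the
translations y \<mapsto> y + k, which are pp-definable as iterates of suc, moves that threshold
to 1. Conversely, < is itself one-sided infinite.\<close>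

lemma pp_sat_cong: "(\<And>i. i \<in> pp_fv \<phi> \<Longrightarrow> a i = b i) \<Longrightarrow> pp_sat \<phi> a = pp_sat \<phi> b"
proof (induction \<phi> arbitrary: a b)
  case (PRel R vs)
  then have "map a vs = map b vs" by simp
  then show ?case by (simp only: pp_sat.simps)
next
  case (PEx x \<phi>)
  have "pp_sat \<phi> (a(x := v)) = pp_sat \<phi> (b(x := v))" for v
    by (rule PEx.IH) (use PEx.prems in auto)
  then show ?case by simp
next
  case (PAnd \<phi> \<psi>)
  have "pp_sat \<phi> a = pp_sat \<phi> b" and "pp_sat \<psi> a = pp_sat \<psi> b"
    by (rule PAnd.IH; use PAnd.prems in simp)+
  then show ?case by simp
qed simp_all

lemma fo_sat_cong: "(\<And>i. i \<in> fo_fv \<phi> \<Longrightarrow> a i = b i) \<Longrightarrow> fo_sat \<phi> a = fo_sat \<phi> b"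
proof (induction \<phi> arbitrary: a b)
  case (FNot \<phi>)
  have "fo_sat \<phi> a = fo_sat \<phi> b"
    by (rule FNot.IH) (use FNot.prems in simp)
  then show ?case by simp
next
  case (FEx x \<phi>)
  have "fo_sat \<phi> (a(x := v)) = fo_sat \<phi> (b(x := v))" for v
    by (rule FEx.IH) (use FEx.prems in auto)
  then show ?case by simp
next
  case (FAnd \<phi> \<psi>)
  have "fo_sat \<phi> a = fo_sat \<phi> b" and "fo_sat \<psi> a = fo_sat \<psi> b"
    by (rule FAnd.IH; use FAnd.prems in simp)+
  then show ?case by simp
qed simp_all

lemma fo_sat_translate: "fo_sat \<phi> (\<lambda>i. a i + t) = fo_sat \<phi> a"
proof (induction \<phi> arbitrary: a)
  case (FEx x \<phi>)
  have "(\<lambda>i. a i + t)(x := v) = (\<lambda>i. (a(x := v - t)) i + t)" for v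
    by auto
  then have "fo_sat (FEx x \<phi>) (\<lambda>i. a i + t) \<longleftrightarrow> (\<exists>v. fo_sat \<phi> (a(x := v - t)))"
    by (simp only: fo_sat.simps FEx.IH)
  also have "\<dots> \<longleftrightarrow> (\<exists>v. fo_sat \<phi> (a(x := v)))"
    by (metis add_diff_cancel)
  finally show ?case by simp
qed auto

lemma fo_definable_translate:
  assumes "fo_definable n R"
  shows "map (\<lambda>x. x + t) xs \<in> R \<longleftrightarrow> xs \<in> R"
proof -
  obtain \<phi> where fv: "fo_fv \<phi> \<subseteq> {..<n}"
    and R: "R = {xs. length xs = n \<and> fo_sat \<phi> (\<lambda>i. if i < n then xs ! i else 0)}"
    using assms unfolding fo_definable_def by blast
  have "fo_sat \<phi> (\<lambda>i. if i < n then map (\<lambda>x. x + t) xs ! i else 0)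
      = fo_sat \<phi> (\<lambda>i. (if i < n then xs ! i else 0) + t)" if "length xs = n"
    by (rule fo_sat_cong) (use fv that in auto)
  then show ?thesis
    unfolding R by (auto simp: fo_sat_translate)
qed

lemma fo_definable_binary_translate:
  "fo_definable 2 R \<Longrightarrow> [x, y] \<in> R \<longleftrightarrow> [0, y - x] \<in> R"
  using fo_definable_translate[of 2 R "- x" "[x, y]"] by simp

fun pp_rename :: "(nat \<Rightarrow> nat) \<Rightarrow> pp \<Rightarrow> pp" where
  "pp_rename f PTrue = PTrue"
| "pp_rename f (PEq i j) = PEq (f i) (f j)"
| "pp_rename f (PRel R vs) = PRel R (map f vs)"
| "pp_rename f (PAnd \<phi> \<psi>) = PAnd (pp_rename f \<phi>) (pp_rename f \<psi>)"
| "pp_rename f (PEx x \<phi>) = PEx (f x) (pp_rename f \<phi>)"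

lemma pp_sat_rename: "inj f \<Longrightarrow> pp_sat (pp_rename f \<phi>) a = pp_sat \<phi> (a \<circ> f)"
proof (induction \<phi> arbitrary: a)
  case (PEx x \<phi>)
  have "a(f x := v) \<circ> f = (a \<circ> f)(x := v)" for v
    using PEx.prems by (auto simp: inj_eq)
  then show ?case by (simp only: pp_rename.simps pp_sat.simps PEx.IH[OF PEx.prems])
qed auto

lemma pp_rels_rename: "pp_rels (pp_rename f \<phi>) = pp_rels \<phi>"
  by (induction \<phi>) auto

lemma pp_fv_rename: "inj f \<Longrightarrow> pp_fv (pp_rename f \<phi>) = f ` pp_fv \<phi>"
  by (induction \<phi>) (auto simp: image_Un image_set_diff)

lemma inj_swap: "inj (id(i := j, j := i))"
  by (auto simp: inj_def)

text \<open>Binary relations pp-definable in \<Gamma>, viewed as predicates on the values of the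
variables 0 and 1; this avoids the list encoding used by pp_definable.\<close>

definition pp_definable_pred :: "zrel set \<Rightarrow> (int \<Rightarrow> int \<Rightarrow> bool) \<Rightarrow> bool" where
  "pp_definable_pred \<Gamma> P \<longleftrightarrow>
     (\<exists>\<phi>. pp_rels \<phi> \<subseteq> \<Gamma> \<and> pp_fv \<phi> \<subseteq> {0, 1} \<and> (\<forall>a. pp_sat \<phi> a = P (a 0) (a 1)))"

lemma pp_definable_pred_cong:
  assumes "pp_definable_pred \<Gamma> P" and "\<And>x y. P x y \<longleftrightarrow> Q x y"
  shows "pp_definable_pred \<Gamma> Q"
proof -
  have "P = Q"
    by (intro ext) (rule assms(2))
  with assms(1) show ?thesis by simp
qed

lemma pp_definable_pred_eq: "pp_definable_pred \<Gamma> (=)"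
  unfolding pp_definable_pred_def by (intro exI[of _ "PEq 0 1"]) auto

lemma pp_definable_pred_conj:
  assumes "pp_definable_pred \<Gamma> P" and "pp_definable_pred \<Gamma> Q"
  shows "pp_definable_pred \<Gamma> (\<lambda>x y. P x y \<and> Q x y)"
proof -
  obtain \<phi> \<psi> where "pp_rels \<phi> \<subseteq> \<Gamma>" "pp_fv \<phi> \<subseteq> {0, 1}" "\<And>a. pp_sat \<phi> a = P (a 0) (a 1)"
    and "pp_rels \<psi> \<subseteq> \<Gamma>" "pp_fv \<psi> \<subseteq> {0, 1}" "\<And>a. pp_sat \<psi> a = Q (a 0) (a 1)"
    using assms unfolding pp_definable_pred_def by metis
  then show ?thesis
    unfolding pp_definable_pred_def by (intro exI[of _ "PAnd \<phi> \<psi>"]) auto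
qed

lemma pp_definable_pred_converse:
  assumes "pp_definable_pred \<Gamma> P"
  shows "pp_definable_pred \<Gamma> (\<lambda>x y. P y x)"
proof -
  obtain \<phi> where "pp_rels \<phi> \<subseteq> \<Gamma>" "pp_fv \<phi> \<subseteq> {0, 1}" "\<And>a. pp_sat \<phi> a = P (a 0) (a 1)"
    using assms unfolding pp_definable_pred_def by metis
  then show ?thesis
    unfolding pp_definable_pred_def
    by (intro exI[of _ "pp_rename (id(0 := 1, 1 := 0)) \<phi>"])
      (auto simp: inj_swap pp_sat_rename pp_rels_rename pp_fv_rename)
qed

lemma pp_definable_pred_relcomp:
  assumes "pp_definable_pred \<Gamma> P" and "pp_definable_pred \<Gamma> Q"
  shows "pp_definable_pred \<Gamma> (\<lambda>x z. \<exists>y. P x y \<and> Q y z)"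
proof -
  obtain \<phi> \<psi> where "pp_rels \<phi> \<subseteq> \<Gamma>" "pp_fv \<phi> \<subseteq> {0, 1}" "\<And>a. pp_sat \<phi> a = P (a 0) (a 1)"
    and "pp_rels \<psi> \<subseteq> \<Gamma>" "pp_fv \<psi> \<subseteq> {0, 1}" "\<And>a. pp_sat \<psi> a = Q (a 0) (a 1)"
    using assms unfolding pp_definable_pred_def by metis
  then show ?thesis
    unfolding pp_definable_pred_def
    \<comment> \<open>variable 2 carries the middle element y\<close>
    by (intro exI[of _ "PEx 2 (PAnd (pp_rename (id(1 := 2, 2 := 1)) \<phi>)
                                    (pp_rename (id(0 := 2, 2 := 0)) \<psi>))"])
      (auto simp: inj_swap pp_sat_rename pp_rels_rename pp_fv_rename)
qed

lemma pp_definable_pred_all_le: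
  "(\<And>j. pp_definable_pred \<Gamma> (P j)) \<Longrightarrow> pp_definable_pred \<Gamma> (\<lambda>x y. \<forall>j\<le>(N::nat). P j x y)"
proof (induction N)
  case 0
  then show ?case by (rule pp_definable_pred_cong) auto
next
  case (Suc N)
  have "pp_definable_pred \<Gamma> (\<lambda>x y. (\<forall>j\<le>N. P j x y) \<and> P (Suc N) x y)"
    by (rule pp_definable_pred_conj[OF Suc.IH[OF Suc.prems] Suc.prems])
  then show ?case by (rule pp_definable_pred_cong) (auto simp: le_Suc_eq)
qed

lemma pp_definable_pred_of_relation:
  assumes "pp_definable \<Gamma> 2 R"
  shows "pp_definable_pred \<Gamma> (\<lambda>x y. [x, y] \<in> R)"
proof -
  obtain \<phi> where "pp_rels \<phi> \<subseteq> \<Gamma>" and fv: "pp_fv \<phi> \<subseteq> {..<2}"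
    and R: "R = {xs. length xs = 2 \<and> pp_sat \<phi> (\<lambda>i. if i < 2 then xs ! i else 0)}"
    using assms unfolding pp_definable_def by blast
  have fv01: "pp_fv \<phi> \<subseteq> {0, 1}"
    using fv by auto
  have "[x, y] \<in> R \<longleftrightarrow> pp_sat \<phi> (\<lambda>i. if i < 2 then [x, y] ! i else 0)" for x y
    unfolding R by simp
  moreover have "pp_sat \<phi> (\<lambda>i. if i < 2 then [a 0, a 1] ! i else 0) = pp_sat \<phi> a" for a
    by (rule pp_sat_cong) (use fv01 in auto)
  ultimately have "pp_sat \<phi> a \<longleftrightarrow> [a 0, a 1] \<in> R" for a
    by metis
  with \<open>pp_rels \<phi> \<subseteq> \<Gamma>\<close> fv01 show ?thesis
    unfolding pp_definable_pred_def by blast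
qed

lemma pp_definable_of_pred:
  assumes "pp_definable_pred \<Gamma> P"
  shows "pp_definable \<Gamma> 2 {[x, y] | x y. P x y}"
proof -
  obtain \<phi> where "pp_rels \<phi> \<subseteq> \<Gamma>" and fv: "pp_fv \<phi> \<subseteq> {0, 1}"
    and P: "\<And>a. pp_sat \<phi> a = P (a 0) (a 1)"
    using assms unfolding pp_definable_pred_def by blast
  have "pp_fv \<phi> \<subseteq> {..<2}"
    using fv by auto
  moreover have "{[x, y] | x y. P x y} =
      {xs. length xs = 2 \<and> pp_sat \<phi> (\<lambda>i. if i < 2 then xs ! i else 0)}"
    by (auto simp: P length_Suc_conv numeral_2_eq_2)
  ultimately show ?thesis
    using \<open>pp_rels \<phi> \<subseteq> \<Gamma>\<close> unfolding pp_definable_def by blast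
qed

lemma pp_definable_pred_translation:
  assumes "pp_definable \<Gamma> 2 suc_rel"
  shows "pp_definable_pred \<Gamma> (\<lambda>x y. y = x + k)"
proof -
  have suc: "pp_definable_pred \<Gamma> (\<lambda>x y. y = x + 1)"
    using pp_definable_pred_of_relation[OF assms]
    by (rule pp_definable_pred_cong) (auto simp: suc_rel_def)
  have nat_shift: "pp_definable_pred \<Gamma> (\<lambda>x y. y = x + int n)" for n
  proof (induction n)
    case 0
    from pp_definable_pred_eq show ?case by (rule pp_definable_pred_cong) auto
  next
    case (Suc n)
    from pp_definable_pred_relcomp[OF Suc suc] show ?case
      by (rule pp_definable_pred_cong) auto
  qed
  show ?thesis
  proof (cases "0 \<le> k")
    case True
    from nat_shift[of "nat k"] show ?thesis
      by (rule pp_definable_pred_cong) (use True in auto)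
  next
    case False
    from pp_definable_pred_converse[OF nat_shift[of "nat (- k)"]] show ?thesis
      by (rule pp_definable_pred_cong) (use False in auto)
  qed
qed

lemma int_upset_eq_atLeast:
  fixes U :: "int set"
  assumes "u \<in> U" and "\<And>w. w \<in> U \<Longrightarrow> c \<le> w" and "\<And>v w. v \<in> U \<Longrightarrow> v \<le> w \<Longrightarrow> w \<in> U"
  obtains g where "U = {g..}"
proof
  define n where "n = (LEAST n. c + int n \<in> U)"
  have "c + int (nat (u - c)) \<in> U" using assms(1,2) by simp
  then have "c + int n \<in> U" unfolding n_def by (rule LeastI)
  moreover have "c + int n \<le> w" if "w \<in> U" for w
  proof -
    have "c \<le> w" using assms(2) that .
    with that have "c + int (nat (w - c)) \<in> U" by simp
    then have "n \<le> nat (w - c)" unfolding n_def by (rule Least_le)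
    with \<open>c \<le> w\<close> show ?thesis by simp
  qed
  ultimately show "U = {c + int n..}"
    using assms(3) by auto
qed

lemma int_window_subset_threshold:
  fixes S :: "int set"
  assumes "c \<le> d" and below: "\<And>z. z < c \<Longrightarrow> z \<notin> S" and above: "\<And>z. d \<le> z \<Longrightarrow> z \<in> S"
  shows "\<exists>g. \<forall>z. (\<forall>j\<le>nat (d - c). z - int j \<in> S) \<longleftrightarrow> g \<le> z"
proof -
  define N where "N = nat (d - c)"
  have N: "int N = d - c"
    using \<open>c \<le> d\<close> unfolding N_def by simp
  obtain g where "{w. {w..} \<subseteq> S} = {g..}"
  proof (rule int_upset_eq_atLeast)
    show "d \<in> {w. {w..} \<subseteq> S}"
      using above by auto
    show "c \<le> w" if "w \<in> {w. {w..} \<subseteq> S}" for w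
      using that below by force
  qed auto
  then have ray: "{w..} \<subseteq> S \<longleftrightarrow> g \<le> w" for w
    by (metis atLeast_iff mem_Collect_eq)
  have window: "(\<forall>j\<le>N. z - int j \<in> S) \<longleftrightarrow> {z - int N..} \<subseteq> S" for z
  proof
    assume window: "\<forall>j\<le>N. z - int j \<in> S"
    then have "c \<le> z - int N"
      using below by (meson le_refl not_le)
    show "{z - int N..} \<subseteq> S"
    proof
      fix w assume "w \<in> {z - int N..}"
      show "w \<in> S"
      proof (cases "w \<le> z")
        case True
        then have "w = z - int (nat (z - w))" and "nat (z - w) \<le> N"
          using \<open>w \<in> {z - int N..}\<close> by auto
        with window show ?thesis by metis
      next
        case False
        with \<open>c \<le> z - int N\<close> N show ?thesis by (intro above) simp
      qed
    qed
  qed auto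
  have "(\<forall>j\<le>nat (d - c). z - int j \<in> S) \<longleftrightarrow> g + int N \<le> z" for z
    unfolding N_def[symmetric] window ray by linarith
  then show ?thesis by blast
qed

lemma one_sided_infinite_window_threshold:
  assumes "one_sided_infinite R"
  shows "\<exists>N g. \<forall>x y. (\<forall>j\<le>N. [x, y - int j] \<in> R) \<longleftrightarrow> g \<le> y - x"
proof -
  obtain c d :: int where "c \<le> d" and bounds:
    "\<And>x. (\<forall>z. z < c \<longrightarrow> [x, x + z] \<notin> R) \<and> (\<forall>z. d \<le> z \<longrightarrow> [x, x + z] \<in> R)"
    using assms unfolding one_sided_infinite_def by blast
  have low: "z \<notin> {z. [0, z] \<in> R}" if "z < c" for z
    using bounds[of 0] that by simp
  have high: "z \<in> {z. [0, z] \<in> R}" if "d \<le> z" for z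
    using bounds[of 0] that by simp
  from int_window_subset_threshold[OF \<open>c \<le> d\<close> low high] obtain g
    where g: "\<forall>z. (\<forall>j\<le>nat (d - c). z - int j \<in> {z. [0, z] \<in> R}) \<longleftrightarrow> g \<le> z" ..
  have fo: "fo_definable 2 R"
    using assms unfolding one_sided_infinite_def by blast
  show ?thesis
  proof (intro exI allI)
    fix x y
    have "[x, y - int j] \<in> R \<longleftrightarrow> y - x - int j \<in> {z. [0, z] \<in> R}" for j
      using fo_definable_binary_translate[OF fo, of x "y - int j"] by (simp add: algebra_simps)
    then show "(\<forall>j\<le>nat (d - c). [x, y - int j] \<in> R) \<longleftrightarrow> g \<le> y - x"
      using spec[OF g, of "y - x"] by simp
  qed
qed

lemma pp_definable_pred_less_if_one_sided_infinite:
  assumes suc: "pp_definable \<Gamma> 2 suc_rel"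
    and "one_sided_infinite R" and R: "pp_definable \<Gamma> 2 R"
  shows "pp_definable_pred \<Gamma> (<)"
proof -
  from one_sided_infinite_window_threshold[OF \<open>one_sided_infinite R\<close>] obtain N g
    where window: "\<forall>x y. (\<forall>j\<le>N. [x, y - int j] \<in> R) \<longleftrightarrow> g \<le> y - x"
    by blast
  have "pp_definable_pred \<Gamma> (\<lambda>x y. [x, y + (g - 1 - int j)] \<in> R)" for j
    using pp_definable_pred_relcomp[OF pp_definable_pred_of_relation[OF R]
        pp_definable_pred_converse[OF pp_definable_pred_translation[OF suc, of "g - 1 - int j"]]]
    by (rule pp_definable_pred_cong) auto
  then have "pp_definable_pred \<Gamma> (\<lambda>x y. \<forall>j\<le>N. [x, y + (g - 1 - int j)] \<in> R)"
    by (rule pp_definable_pred_all_le)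
  moreover have "(\<forall>j\<le>N. [x, y + (g - 1 - int j)] \<in> R) \<longleftrightarrow> x < y" for x y
  proof -
    have "(\<forall>j\<le>N. [x, y + (g - 1 - int j)] \<in> R) \<longleftrightarrow> g \<le> y + (g - 1) - x"
      using window[rule_format, of x "y + (g - 1)"] by (simp add: add_diff_eq)
    also have "\<dots> \<longleftrightarrow> x < y"
      by linarith
    finally show ?thesis .
  qed
  ultimately show ?thesis
    by (rule pp_definable_pred_cong)
qed

lemma one_sided_infinite_lt_rel: "one_sided_infinite lt_rel"
proof -
  have "lt_rel = {xs. length xs = 2 \<and> fo_sat (FLt 0 1) (\<lambda>i. if i < 2 then xs ! i else 0)}"
    by (auto simp: lt_rel_def length_Suc_conv numeral_2_eq_2)
  then have "fo_definable 2 lt_rel"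
    unfolding fo_definable_def by (intro exI[of _ "FLt 0 1"]) auto
  then show ?thesis
    unfolding one_sided_infinite_def lt_rel_def by (intro conjI exI[of _ 1]) auto
qed

theorem mainTheorem13:
  fixes \<Gamma> :: "zrel set"
  assumes "reduct_Z_lt \<Gamma>"
    and "pp_definable \<Gamma> 2 suc_rel"
  shows "pp_definable \<Gamma> 2 lt_rel \<longleftrightarrow> (\<exists>R. one_sided_infinite R \<and> pp_definable \<Gamma> 2 R)"
proof
  assume "pp_definable \<Gamma> 2 lt_rel"
  with one_sided_infinite_lt_rel show "\<exists>R. one_sided_infinite R \<and> pp_definable \<Gamma> 2 R"
    by blast
next
  assume "\<exists>R. one_sided_infinite R \<and> pp_definable \<Gamma> 2 R"
  then obtain R where "one_sided_infinite R" and "pp_definable \<Gamma> 2 R"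
    by blast
  with assms(2) have "pp_definable_pred \<Gamma> (<)"
    by (rule pp_definable_pred_less_if_one_sided_infinite)
  then show "pp_definable \<Gamma> 2 lt_rel"
    unfolding lt_rel_def by (rule pp_definable_of_pred)
qed

end
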